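(* Let $d\ge1$ and let $P\subseteq\mathbb{R}^d$ be a $d$-dimensional lattice polytope. Then $kP$ is spanning for every integer $k\ge\lfloor\frac{d+1}{2}\rfloor$.
   Context: A lattice polytope is the convex hull of finitely many points of $\mathbb{Z}^d$. A lattice polytope $Q\subseteq\mathbb{R}^d$ is spanning if every point of $\mathbb{Z}^d$ is an affine integral combination of lattice points in $Q$. $kP=\{kx:x\in P\}$. *)

theory Defs
  imports "HOL-Analysis.Analysis"
begin

text \<open>Lattice points of R^d, with R^d rendered as real^'n (d = CARD('n)).\<close>
definition lattice_points :: "(real^'n) set" where
  "lattice_points = {x. \<forall>i. x $ i \<in> \<int>}"

definition lattice_polytope :: "(real^'n) set \<Rightarrow> bool" where
  "lattice_polytope P \<longleftrightarrow>
     (\<exists>S. finite S \<and> S \<subseteq> lattice_points \<and> P = convex hull S)"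

definition spanning :: "(real^'n) set \<Rightarrow> bool" where
  "spanning Q \<longleftrightarrow>
     (\<forall>z \<in> lattice_points. \<exists>T (c :: real^'n \<Rightarrow> int).
        finite T \<and> T \<subseteq> Q \<inter> lattice_points \<and>
        (\<Sum>v\<in>T. c v) = 1 \<and> (\<Sum>v\<in>T. of_int (c v) *\<^sub>R v) = z)"

end

theory Submission
  imports Defs
begin

text \<open>Choose vertices \<open>v\<^sub>0, \<dots>, v\<^sub>d\<close> of \<open>P\<close> forming an affine basis and write a lattice point
  as \<open>z = k v\<^sub>0 + \<Sum> \<mu>\<^sub>i (v\<^sub>i - v\<^sub>0)\<close>. Since \<open>frac \<mu> + frac (-\<mu>) \<le> 1\<close>, one of
  \<open>\<Sum> frac \<mu>\<^sub>i\<close>, \<open>\<Sum> frac (-\<mu>\<^sub>i)\<close> is at most \<open>d/2 \<le> k\<close>; the corresponding point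
  \<open>k v\<^sub>0 + \<Sum> frac (\<plusminus>\<mu>\<^sub>i) (v\<^sub>i - v\<^sub>0)\<close> is a lattice point of \<open>kP\<close> differing from \<open>z\<close>
  (or from its reflection \<open>2k v\<^sub>0 - z\<close>) by an integer combination of the edges
  \<open>v\<^sub>i - v\<^sub>0\<close>. Each edge is the difference of the lattice points \<open>k v\<^sub>0 + (v\<^sub>i - v\<^sub>0)\<close> and
  \<open>k v\<^sub>0\<close> of \<open>kP\<close>, which makes \<open>z\<close> an affine integral combination of lattice points of \<open>kP\<close>.\<close>

lemma lattice_points_add: "x \<in> lattice_points \<Longrightarrow> y \<in> lattice_points \<Longrightarrow> x + y \<in> lattice_points"
  by (auto simp: lattice_points_def)

lemma lattice_points_diff: "x \<in> lattice_points \<Longrightarrow> y \<in> lattice_points \<Longrightarrow> x - y \<in> lattice_points"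
  by (auto simp: lattice_points_def)

lemma lattice_points_scaleR: "c \<in> \<int> \<Longrightarrow> x \<in> lattice_points \<Longrightarrow> c *\<^sub>R x \<in> lattice_points"
  by (auto simp: lattice_points_def)

lemma lattice_points_sum: "(\<And>i. i \<in> I \<Longrightarrow> x i \<in> lattice_points) \<Longrightarrow> sum x I \<in> lattice_points"
  by (simp add: lattice_points_def Ints_sum)

definition affine_int_hull :: "(real^'n) set \<Rightarrow> (real^'n) set" where
  "affine_int_hull S = {z. \<exists>T (c :: real^'n \<Rightarrow> int). finite T \<and> T \<subseteq> S \<and>
        (\<Sum>v\<in>T. c v) = 1 \<and> (\<Sum>v\<in>T. of_int (c v) *\<^sub>R v) = z}"

lemma spanning_iff_affine_int_hull:
  "spanning Q \<longleftrightarrow> lattice_points \<subseteq> affine_int_hull (Q \<inter> lattice_points)"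
  unfolding spanning_def affine_int_hull_def by blast

lemma affine_int_hull_superset: "S \<subseteq> affine_int_hull S"
proof
  fix x assume "x \<in> S"
  then show "x \<in> affine_int_hull S"
    unfolding affine_int_hull_def by (intro CollectI exI[of _ "{x}"] exI[of _ "\<lambda>_. 1"]) auto
qed

lemma affine_int_hull_mono: "S \<subseteq> S' \<Longrightarrow> affine_int_hull S \<subseteq> affine_int_hull S'"
  unfolding affine_int_hull_def by blast

lemma affine_int_combination_extend:
  fixes c :: "real^'n \<Rightarrow> int"
  assumes "finite T'" "T \<subseteq> T'"
  shows "(\<Sum>v\<in>T'. if v \<in> T then c v else 0) = sum c T"
    and "(\<Sum>v\<in>T'. of_int (if v \<in> T then c v else 0) *\<^sub>R v) = (\<Sum>v\<in>T. of_int (c v) *\<^sub>R v)"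
proof -
  have restrict: "(\<Sum>v\<in>T'. if v \<in> T then g v else 0) = sum g T"
    for g :: "real^'n \<Rightarrow> 'b::comm_monoid_add"
    by (metis sum.inter_restrict[OF assms(1)] Int_absorb1[OF assms(2)])
  show "(\<Sum>v\<in>T'. if v \<in> T then c v else 0) = sum c T"
    by (rule restrict)
  show "(\<Sum>v\<in>T'. of_int (if v \<in> T then c v else 0) *\<^sub>R v) = (\<Sum>v\<in>T. of_int (c v) *\<^sub>R v)"
    using restrict[of "\<lambda>v. of_int (c v) *\<^sub>R v"]
    by (simp add: if_distrib[of "\<lambda>a. of_int a *\<^sub>R _"] cong: if_cong)
qed

lemma affine_int_hull_add_diff:
  assumes "x \<in> affine_int_hull S" "y \<in> affine_int_hull S" "w \<in> affine_int_hull S"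
  shows "x + y - w \<in> affine_int_hull S"
proof -
  obtain T1 c1 where 1: "finite T1" "T1 \<subseteq> S" "sum c1 T1 = 1" "(\<Sum>v\<in>T1. of_int (c1 v) *\<^sub>R v) = x"
    using assms(1) unfolding affine_int_hull_def by blast
  obtain T2 c2 where 2: "finite T2" "T2 \<subseteq> S" "sum c2 T2 = 1" "(\<Sum>v\<in>T2. of_int (c2 v) *\<^sub>R v) = y"
    using assms(2) unfolding affine_int_hull_def by blast
  obtain T3 c3 where 3: "finite T3" "T3 \<subseteq> S" "sum c3 T3 = 1" "(\<Sum>v\<in>T3. of_int (c3 v) *\<^sub>R v) = w"
    using assms(3) unfolding affine_int_hull_def by blast
  define T where "T = T1 \<union> T2 \<union> T3"
  define c where "c v = (if v \<in> T1 then c1 v else 0) + (if v \<in> T2 then c2 v else 0)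
    - (if v \<in> T3 then c3 v else 0)" for v
  have T: "finite T" "T1 \<subseteq> T" "T2 \<subseteq> T" "T3 \<subseteq> T"
    using 1 2 3 by (auto simp: T_def)
  have "sum c T = 1"
    using affine_int_combination_extend(1)[OF T(1)] T 1 2 3
    by (simp add: c_def sum.distrib sum_subtractf)
  moreover have "(\<Sum>v\<in>T. of_int (c v) *\<^sub>R v) = x + y - w"
    using affine_int_combination_extend(2)[OF T(1)] T 1 2 3
    by (simp add: c_def scaleR_left_distrib scaleR_left_diff_distrib sum.distrib sum_subtractf)
  moreover have "T \<subseteq> S" using 1 2 3 by (auto simp: T_def)
  ultimately show ?thesis using T(1) unfolding affine_int_hull_def by blast
qed

lemma affine_int_hull_add_int_multiple:
  assumes "x \<in> affine_int_hull S" "a \<in> affine_int_hull S" "b \<in> affine_int_hull S"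
  shows "x + of_int n *\<^sub>R (a - b) \<in> affine_int_hull S"
proof -
  have nat_multiple: "x + real m *\<^sub>R (a' - b') \<in> affine_int_hull S"
    if "a' \<in> affine_int_hull S" "b' \<in> affine_int_hull S" for m a' b'
  proof (induction m)
    case 0
    show ?case using assms(1) by simp
  next
    case (Suc m)
    have "x + real (Suc m) *\<^sub>R (a' - b') = (x + real m *\<^sub>R (a' - b')) + a' - b'"
      by (simp add: algebra_simps)
    then show ?case using affine_int_hull_add_diff[OF Suc that] by metis
  qed
  show ?thesis
  proof (cases "n \<ge> 0")
    case True
    then show ?thesis using nat_multiple[OF assms(2,3), of "nat n"] by simp
  next
    case False
    then have "of_int n *\<^sub>R (a - b) = real (nat (- n)) *\<^sub>R (b - a)"
      by (simp add: algebra_simps)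
    then show ?thesis using nat_multiple[OF assms(3,2), of "nat (- n)"] by simp
  qed
qed

lemma affine_int_hull_add_int_combination:
  assumes "x \<in> affine_int_hull S" "b \<in> affine_int_hull S"
    and "\<And>i. i \<in> I \<Longrightarrow> a i \<in> affine_int_hull S"
  shows "x + (\<Sum>i\<in>I. of_int (n i) *\<^sub>R (a i - b)) \<in> affine_int_hull S"
  using assms(3)
proof (induction I rule: infinite_finite_induct)
  case (insert i I)
  then have "x + (\<Sum>j\<in>I. of_int (n j) *\<^sub>R (a j - b)) + of_int (n i) *\<^sub>R (a i - b)
      \<in> affine_int_hull S"
    by (intro affine_int_hull_add_int_multiple assms(2)) auto
  with insert(1,2) show ?case by (simp add: algebra_simps)
qed (use assms(1) in simp_all)

lemma convex_hull_insert_mem: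
  fixes v0 :: "'a::real_vector"
  assumes "finite B" "v0 \<notin> B" "\<And>v. v \<in> B \<Longrightarrow> 0 \<le> t v" "sum t B \<le> 1"
  shows "v0 + (\<Sum>v\<in>B. t v *\<^sub>R (v - v0)) \<in> convex hull (insert v0 B)"
proof -
  define u where "u x = (if x = v0 then 1 - sum t B else t x)" for x
  have "u x = t x" if "x \<in> B" for x
    using assms(2) that by (auto simp: u_def)
  then have "sum u B = sum t B" "(\<Sum>x\<in>B. u x *\<^sub>R x) = (\<Sum>x\<in>B. t x *\<^sub>R x)"
    by (auto intro: sum.cong)
  then have "sum u (insert v0 B) = 1" and
    "(\<Sum>x\<in>insert v0 B. u x *\<^sub>R x) = v0 + (\<Sum>v\<in>B. t v *\<^sub>R (v - v0))"
    using assms(1,2) by (auto simp: u_def scaleR_right_diff_distrib sum_subtractf scaleR_sum_left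
        algebra_simps cong: sum.cong)
  moreover have "\<forall>x\<in>insert v0 B. 0 \<le> u x"
    using assms(3,4) by (auto simp: u_def)
  ultimately show ?thesis
    using assms(1) by (auto simp: convex_hull_finite intro!: exI[of _ u])
qed

lemma dilated_convex_hull_insert_mem:
  fixes v0 :: "'a::real_vector"
  assumes "finite B" "v0 \<notin> B" "k > 0" "\<And>v. v \<in> B \<Longrightarrow> 0 \<le> l v" "sum l B \<le> k"
  shows "k *\<^sub>R v0 + (\<Sum>v\<in>B. l v *\<^sub>R (v - v0)) \<in> (\<lambda>x. k *\<^sub>R x) ` (convex hull (insert v0 B))"
proof -
  have "sum (\<lambda>v. l v / k) B \<le> 1"
    using assms(3,5) by (simp add: sum_divide_distrib[symmetric])
  then have "v0 + (\<Sum>v\<in>B. (l v / k) *\<^sub>R (v - v0)) \<in> convex hull (insert v0 B)"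
    using assms(1-4) by (intro convex_hull_insert_mem) simp_all
  moreover have "k *\<^sub>R v0 + (\<Sum>v\<in>B. l v *\<^sub>R (v - v0))
      = k *\<^sub>R (v0 + (\<Sum>v\<in>B. (l v / k) *\<^sub>R (v - v0)))"
    using assms(3) by (simp add: scaleR_right_distrib scaleR_sum_right)
  ultimately show ?thesis by (rule rev_image_eqI)
qed

lemma sum_frac_or_sum_frac_uminus_le:
  fixes \<mu> :: "'a \<Rightarrow> real" and k :: nat
  assumes "card I \<le> 2 * k"
  shows "(\<Sum>i\<in>I. frac (\<mu> i)) \<le> k \<or> (\<Sum>i\<in>I. frac (- \<mu> i)) \<le> k"
proof -
  have "(\<Sum>i\<in>I. frac (\<mu> i)) + (\<Sum>i\<in>I. frac (- \<mu> i)) \<le> (\<Sum>i\<in>I. 1)"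
    unfolding sum.distrib[symmetric]
    by (intro sum_mono) (simp add: frac_neg less_imp_le[OF frac_lt_1])
  also have "\<dots> \<le> 2 * real k"
    using assms by simp
  finally show ?thesis by linarith
qed

lemma dilated_simplex_affine_int_hull_mem:
  fixes v0 :: "real^'n" and B :: "(real^'n) set" and k :: nat
  defines "Q \<equiv> (\<lambda>x. real k *\<^sub>R x) ` (convex hull (insert v0 B))"
  assumes "finite B" "v0 \<notin> B" "insert v0 B \<subseteq> lattice_points" "k \<ge> 1"
    and "(\<Sum>v\<in>B. frac (\<mu> v)) \<le> real k"
    and "real k *\<^sub>R v0 + (\<Sum>v\<in>B. \<mu> v *\<^sub>R (v - v0)) \<in> lattice_points"
  shows "real k *\<^sub>R v0 + (\<Sum>v\<in>B. \<mu> v *\<^sub>R (v - v0)) \<in> affine_int_hull (Q \<inter> lattice_points)"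
proof -
  let ?H = "affine_int_hull (Q \<inter> lattice_points)"
  define p0 where "p0 = real k *\<^sub>R v0"
  have in_Q: "p0 + (\<Sum>v\<in>B. l v *\<^sub>R (v - v0)) \<in> Q"
    if "\<And>v. v \<in> B \<Longrightarrow> 0 \<le> l v" "sum l B \<le> real k" for l
    unfolding Q_def p0_def using assms(2,3,5) that by (intro dilated_convex_hull_insert_mem) auto
  have edges: "v - v0 \<in> lattice_points" if "v \<in> B" for v
    using assms(4) that by (auto intro: lattice_points_diff)
  have p0_lattice: "p0 \<in> lattice_points"
    unfolding p0_def using assms(4) by (intro lattice_points_scaleR) auto
  have p0_H: "p0 \<in> ?H"
    using in_Q[of "\<lambda>_. 0"] p0_lattice affine_int_hull_superset by fastforce
  have vertices_H: "p0 + (v - v0) \<in> ?H" if "v \<in> B" for v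
  proof -
    have "(\<Sum>u\<in>B. (if u = v then 1 else 0) *\<^sub>R (u - v0))
        = (\<Sum>u\<in>B. if u = v then u - v0 else 0)"
      by (rule sum.cong) auto
    then have "p0 + (v - v0) \<in> Q"
      using in_Q[of "\<lambda>u. if u = v then 1 else 0"] assms(2,5) that by simp
    moreover have "p0 + (v - v0) \<in> lattice_points"
      using p0_lattice edges[OF that] by (rule lattice_points_add)
    ultimately show ?thesis using affine_int_hull_superset by blast
  qed
  define w where "w = p0 + (\<Sum>v\<in>B. frac (\<mu> v) *\<^sub>R (v - v0))"
  have w_eq: "w = (p0 + (\<Sum>v\<in>B. \<mu> v *\<^sub>R (v - v0)))
      - (\<Sum>v\<in>B. of_int \<lfloor>\<mu> v\<rfloor> *\<^sub>R (v - v0))"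
    by (simp add: w_def frac_def scaleR_left_diff_distrib sum_subtractf)
  have "w \<in> Q"
    unfolding w_def using assms(6) by (intro in_Q) auto
  moreover have "(\<Sum>v\<in>B. of_int \<lfloor>\<mu> v\<rfloor> *\<^sub>R (v - v0)) \<in> lattice_points"
    using edges by (intro lattice_points_sum lattice_points_scaleR) auto
  then have "w \<in> lattice_points"
    unfolding w_eq p0_def using assms(7) by (rule lattice_points_diff[rotated])
  ultimately have "w \<in> ?H" using affine_int_hull_superset by blast
  then have "w + (\<Sum>v\<in>B. of_int \<lfloor>\<mu> v\<rfloor> *\<^sub>R ((p0 + (v - v0)) - p0)) \<in> ?H"
    using p0_H vertices_H by (rule affine_int_hull_add_int_combination)
  then show ?thesis by (simp add: w_eq p0_def)
qed

lemma full_dimensional_affine_frame: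
  fixes S :: "'a::euclidean_space set"
  assumes "aff_dim S = DIM('a)"
  obtains v0 B where "finite B" "v0 \<notin> B" "insert v0 B \<subseteq> S" "card B = DIM('a)"
    "\<And>x. \<exists>\<mu>. x = (\<Sum>v\<in>B. \<mu> v *\<^sub>R (v - v0))"
proof -
  obtain B0 where B0: "B0 \<subseteq> S" "\<not> affine_dependent B0" "affine hull S = affine hull B0"
    using affine_basis_exists by blast
  have "aff_dim B0 = DIM('a)"
    using assms B0(3) by (metis aff_dim_affine_hull)
  then have card_B0: "card B0 = DIM('a) + 1"
    using aff_dim_affine_independent[OF B0(2)] by simp
  then obtain v0 where v0: "v0 \<in> B0"
    by fastforce
  define B where "B = B0 - {v0}"
  define U where "U = (\<lambda>x. x - v0) ` B"
  have B: "v0 \<notin> B" "insert v0 B = B0" "card B = DIM('a)"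
    using v0 card_B0 by (auto simp: B_def card_Diff_singleton)
  then have "finite B"
    by (metis DIM_positive card_ge_0_finite)
  have inj: "inj_on (\<lambda>x. x - v0) B"
    by (simp add: inj_on_def)
  have "independent U"
    using B0(2) affine_dependent_iff_dependent[OF B(1)] B(2) by (simp add: U_def)
  moreover have "card U = dim (UNIV :: 'a set)"
    using card_image[OF inj] B(3) by (simp add: U_def)
  ultimately have span_U: "span U = UNIV"
    using card_eq_dim[of U UNIV] \<open>finite B\<close> by (simp add: U_def top_le)
  have "\<exists>\<mu>. x = (\<Sum>v\<in>B. \<mu> v *\<^sub>R (v - v0))" for x
  proof -
    obtain c where "x = (\<Sum>u\<in>U. c u *\<^sub>R u)"
      using span_U span_finite[of U] \<open>finite B\<close> by (auto simp: U_def)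
    then have "x = (\<Sum>v\<in>B. c (v - v0) *\<^sub>R (v - v0))"
      by (simp add: U_def sum.reindex[OF inj])
    then show ?thesis by (rule exI[of _ "\<lambda>v. c (v - v0)"])
  qed
  with B B0(1) \<open>finite B\<close> show ?thesis
    using that by blast
qed

lemma lattice_points_subset_affine_int_hull_dilated_simplex:
  fixes v0 :: "real^'n" and B :: "(real^'n) set" and k :: nat
  defines "Q \<equiv> (\<lambda>x. real k *\<^sub>R x) ` (convex hull (insert v0 B))"
  assumes "finite B" "v0 \<notin> B" "insert v0 B \<subseteq> lattice_points" "k \<ge> 1" "card B \<le> 2 * k"
    and coords: "\<And>x. \<exists>\<mu>. x = (\<Sum>v\<in>B. \<mu> v *\<^sub>R (v - v0))"
  shows "lattice_points \<subseteq> affine_int_hull (Q \<inter> lattice_points)"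
proof
  fix z :: "real^'n"
  assume z: "z \<in> lattice_points"
  let ?H = "affine_int_hull (Q \<inter> lattice_points)"
  note mem = dilated_simplex_affine_int_hull_mem[OF assms(2-5), folded Q_def]
  define p0 where "p0 = real k *\<^sub>R v0"
  obtain \<mu> where "z - p0 = (\<Sum>v\<in>B. \<mu> v *\<^sub>R (v - v0))"
    using coords by blast
  then have z_eq: "z = p0 + (\<Sum>v\<in>B. \<mu> v *\<^sub>R (v - v0))"
    by (simp add: algebra_simps)
  have p0_lattice: "p0 \<in> lattice_points"
    unfolding p0_def using assms(4) by (intro lattice_points_scaleR) auto
  have p0_H: "p0 \<in> ?H"
    using mem[of "\<lambda>_. 0"] p0_lattice by (simp add: p0_def)
  consider "(\<Sum>v\<in>B. frac (\<mu> v)) \<le> k" | "(\<Sum>v\<in>B. frac (- \<mu> v)) \<le> k"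
    using sum_frac_or_sum_frac_uminus_le[OF assms(6)] by blast
  then show "z \<in> ?H"
  proof cases
    case 1
    then show ?thesis using mem[of \<mu>] z by (simp add: z_eq p0_def)
  next
    case 2
    have reflected: "p0 + p0 - z = p0 + (\<Sum>v\<in>B. (- \<mu> v) *\<^sub>R (v - v0))"
      by (simp add: z_eq sum_negf)
    have "p0 + p0 - z \<in> lattice_points"
      using p0_lattice z by (intro lattice_points_diff lattice_points_add)
    then have "p0 + p0 - z \<in> ?H"
      unfolding reflected unfolding p0_def by (rule mem[OF 2])
    from affine_int_hull_add_diff[OF p0_H p0_H this] show ?thesis by simp
  qed
qed

theorem mainTheorem5:
  fixes P :: "(real^'n) set" and k :: nat
  assumes "lattice_polytope P"
    and "aff_dim P = int CARD('n)"
    and "k \<ge> (CARD('n) + 1) div 2"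
  shows "spanning ((\<lambda>x. real k *\<^sub>R x) ` P)"
proof -
  obtain S where S: "finite S" "S \<subseteq> lattice_points" "P = convex hull S"
    using assms(1) unfolding lattice_polytope_def by blast
  have "aff_dim S = DIM(real^'n)"
    using assms(2) S(3) by (simp add: aff_dim_convex_hull)
  then obtain v0 B where frame: "finite B" "v0 \<notin> B" "insert v0 B \<subseteq> S" "card B = CARD('n)"
      "\<And>x. \<exists>\<mu>. x = (\<Sum>v\<in>B. \<mu> v *\<^sub>R (v - v0))"
    by (rule full_dimensional_affine_frame) auto
  have "1 \<le> CARD('n)"
    by (simp add: Suc_leI)
  with assms(3) have k: "k \<ge> 1" "card B \<le> 2 * k"
    unfolding frame(4) by presburger+
  have "lattice_points \<subseteq>
      affine_int_hull ((\<lambda>x. real k *\<^sub>R x) ` (convex hull (insert v0 B)) \<inter> lattice_points)"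
    using frame S(2) k by (intro lattice_points_subset_affine_int_hull_dilated_simplex) auto
  also have "\<dots> \<subseteq> affine_int_hull ((\<lambda>x. real k *\<^sub>R x) ` P \<inter> lattice_points)"
    using hull_mono[OF frame(3)] S(3) by (intro affine_int_hull_mono Int_mono image_mono) auto
  finally show ?thesis
    by (simp add: spanning_iff_affine_int_hull)
qed

end
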